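(* Let $T$ be a measure-preserving automorphism of a standard probability Borel space $(X,\mathcal{B},\mu)$, where $X$ is endowed with a metric $d$ generating the $\sigma$-algebra $\mathcal{B}$. Let $\{W_n\}_{n\in\mathbb{N}}$ be measurable subsets of $X$ and $\{q_n\}_{n\in\mathbb{N}}$ an increasing sequence of natural numbers. If $\sup_{x\in W_n}d(T^{q_n}x,x)\to 0$, then $\{q_n\}$ is a rigidity sequence for $T$ along $\{W_n\}$.
   Context: $\{q_n\}$ is a rigidity sequence for $T$ along $\{W_n\}$ if $\mu((T^{-q_n}A\,\triangle\, A)\cap W_n)\to 0$ for every $A\in\mathcal{B}$. *)

theory Defs
  imports "HOL-Analysis.Analysis" "HOL-Probability.Probability"
begin

text \<open>A measurable space is standard Borel if it is Borel isomorphic to a Polish space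
  (here: to the Borel sigma algebra of some Polish type 'b).\<close>
definition standard_borel_via :: "'a measure \<Rightarrow> ('a \<Rightarrow> 'b::polish_space) \<Rightarrow> bool" where
  "standard_borel_via M f \<longleftrightarrow>
     bij_betw f (space M) UNIV \<and> f \<in> M \<rightarrow>\<^sub>M borel \<and> inv_into (space M) f \<in> borel \<rightarrow>\<^sub>M M"

definition measure_preserving :: "'a measure \<Rightarrow> ('a \<Rightarrow> 'a) \<Rightarrow> bool" where
  "measure_preserving M T \<longleftrightarrow> T \<in> M \<rightarrow>\<^sub>M M \<and> distr M M T = M"

definition mp_automorphism :: "'a measure \<Rightarrow> ('a \<Rightarrow> 'a) \<Rightarrow> bool" where
  "mp_automorphism M T \<longleftrightarrow>
     bij_betw T (space M) (space M) \<and> measure_preserving M T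
     \<and> measure_preserving M (inv_into (space M) T)"

definition rigidity_seq_along :: "'a measure \<Rightarrow> ('a \<Rightarrow> 'a) \<Rightarrow> (nat \<Rightarrow> nat) \<Rightarrow> (nat \<Rightarrow> 'a set) \<Rightarrow> bool" where
  "rigidity_seq_along M T q W \<longleftrightarrow>
     (\<forall>A\<in>sets M. (\<lambda>n. measure M (((((T ^^ q n) -` A \<inter> space M) - A) \<union> (A - ((T ^^ q n) -` A \<inter> space M))) \<inter> W n))
        \<longlonglongrightarrow> 0)"

end

theory Submission
  imports Defs
begin

text \<open>Write S n = T^(q n).  The measurable sets A with \<mu>((S n)^-1 A \<triangle> A \<inter> W n) \<rightarrow> 0 are
  closed under complements and finite unions, and, since S n preserves \<mu>, under approximation
  in the measure of the symmetric difference; hence they form a \<sigma>-algebra.  A closed set F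
  belongs to it: once S n moves the points of W n by less than r, the defect of F lies in
  N \<union> (S n)^-1 N for the shell N of points outside F at distance less than r from F, and
  \<mu>(N) \<rightarrow> 0 as r \<rightarrow> 0.  As the closed sets generate the Borel sets, every measurable set
  belongs to it.\<close>

lemma measure_preserving_funpow:
  assumes "measure_preserving M T"
  shows "measure_preserving M (T ^^ n)"
proof (induction n)
  case 0
  then show ?case by (simp add: measure_preserving_def distr_id2)
next
  case (Suc n)
  have T: "T \<in> M \<rightarrow>\<^sub>M M" "distr M M T = M" and Tn: "T ^^ n \<in> M \<rightarrow>\<^sub>M M" "distr M M (T ^^ n) = M"
    using assms Suc by (auto simp: measure_preserving_def)
  have "distr M M (T \<circ> T ^^ n) = distr (distr M M (T ^^ n)) M T"
    using distr_distr[OF T(1) Tn(1)] by simp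
  then show ?case
    using T Tn by (simp add: measure_preserving_def measurable_comp comp_def)
qed

locale rigidity_setting = finite_measure M for M :: "'a measure" +
  fixes S :: "nat \<Rightarrow> 'a \<Rightarrow> 'a" and W :: "nat \<Rightarrow> 'a set"
  assumes space_eq_UNIV: "space M = UNIV"
    and measure_preserving_S: "\<And>n. measure_preserving M (S n)"
    and sets_W: "\<And>n. W n \<in> sets M"
begin

definition rigid :: "'a set \<Rightarrow> bool" where
  "rigid A \<longleftrightarrow> (\<lambda>n. measure M (sym_diff (S n -` A) A \<inter> W n)) \<longlonglongrightarrow> 0"

lemma measurable_S: "S n \<in> M \<rightarrow>\<^sub>M M"
  using measure_preserving_S by (simp add: measure_preserving_def)

lemma sets_vimage_S: "A \<in> sets M \<Longrightarrow> S n -` A \<in> sets M"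
  using measurable_sets[OF measurable_S] space_eq_UNIV by simp

lemma measure_vimage_S:
  assumes "A \<in> sets M"
  shows "measure M (S n -` A) = measure M A"
proof -
  have "measure (distr M M (S n)) A = measure M (S n -` A)"
    using measure_distr[OF measurable_S assms] space_eq_UNIV by simp
  then show ?thesis
    using measure_preserving_S[of n] by (simp add: measure_preserving_def)
qed

lemma sets_rigidity_defect: "A \<in> sets M \<Longrightarrow> sym_diff (S n -` A) A \<inter> W n \<in> sets M"
  using sets_vimage_S sets_W by auto

lemma rigid_empty: "rigid {}"
  by (simp add: rigid_def)

lemma rigid_Compl: "rigid A \<Longrightarrow> rigid (- A)"
proof -
  have "sym_diff (S n -` (- A)) (- A) = sym_diff (S n -` A) A" for n
    by auto
  then show "rigid A \<Longrightarrow> rigid (- A)"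
    by (simp add: rigid_def)
qed

lemma rigid_Un:
  assumes A: "A \<in> sets M" "rigid A" and B: "B \<in> sets M" "rigid B"
  shows "rigid (A \<union> B)"
  unfolding rigid_def
proof (rule Lim_null_comparison)
  let ?d = "\<lambda>C n. measure M (sym_diff (S n -` C) C \<inter> W n)"
  show "(\<lambda>n. ?d A n + ?d B n) \<longlonglongrightarrow> 0"
    using A(2) B(2) tendsto_add[of "?d A" 0 _ "?d B" 0] by (simp add: rigid_def)
  have "?d (A \<union> B) n \<le> ?d A n + ?d B n" for n
  proof -
    have "sym_diff (S n -` (A \<union> B)) (A \<union> B) \<inter> W n
        \<subseteq> (sym_diff (S n -` A) A \<inter> W n) \<union> (sym_diff (S n -` B) B \<inter> W n)"
      by auto
    then have "?d (A \<union> B) n \<le> measure M ((sym_diff (S n -` A) A \<inter> W n) \<union> (sym_diff (S n -` B) B \<inter> W n))"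
      using A B by (intro finite_measure_mono sets.Un sets_rigidity_defect)
    also have "\<dots> \<le> ?d A n + ?d B n"
      using A B by (intro measure_Un_le sets_rigidity_defect)
    finally show ?thesis .
  qed
  then show "\<forall>\<^sub>F n in sequentially. norm (?d (A \<union> B) n) \<le> ?d A n + ?d B n"
    by simp
qed

lemma rigid_finite_UN:
  fixes A :: "nat \<Rightarrow> 'a set"
  assumes "\<And>i. A i \<in> sets M" "\<And>i. rigid (A i)"
  shows "rigid (\<Union>i<K. A i)"
proof (induction K)
  case 0
  then show ?case by (simp add: rigid_empty)
next
  case (Suc K)
  have "(\<Union>i<K. A i) \<in> sets M"
    using assms(1) by (intro sets.finite_UN) auto
  then show ?case
    using Suc assms by (simp add: lessThan_Suc Un_commute rigid_Un)
qed

lemma rigidity_defect_le: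
  assumes A: "A \<in> sets M" and B: "B \<in> sets M"
  shows "measure M (sym_diff (S n -` A) A \<inter> W n)
    \<le> measure M (sym_diff (S n -` B) B \<inter> W n) + 2 * measure M (sym_diff A B)"
proof -
  let ?D = "sym_diff A B"
  have D: "?D \<in> sets M" "S n -` ?D \<in> sets M"
    using A B sets_vimage_S by auto
  have E: "sym_diff (S n -` B) B \<inter> W n \<in> sets M"
    using B by (rule sets_rigidity_defect)
  have "sym_diff (S n -` A) A \<inter> W n \<subseteq> (sym_diff (S n -` B) B \<inter> W n \<union> ?D) \<union> S n -` ?D"
    by auto
  then have "measure M (sym_diff (S n -` A) A \<inter> W n)
      \<le> measure M ((sym_diff (S n -` B) B \<inter> W n \<union> ?D) \<union> S n -` ?D)"
    using sets.Un[OF sets.Un[OF E D(1)] D(2)] by (rule finite_measure_mono)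
  also have "\<dots> \<le> measure M (sym_diff (S n -` B) B \<inter> W n \<union> ?D) + measure M (S n -` ?D)"
    using sets.Un[OF E D(1)] D(2) by (rule measure_Un_le)
  also have "\<dots> \<le> measure M (sym_diff (S n -` B) B \<inter> W n) + measure M ?D + measure M (S n -` ?D)"
    using measure_Un_le[OF E D(1)] by linarith
  finally show ?thesis
    using measure_vimage_S[OF D(1), of n] by linarith
qed

lemma rigid_approx:
  assumes A: "A \<in> sets M"
    and approx: "\<And>e. e > 0 \<Longrightarrow> \<exists>B\<in>sets M. rigid B \<and> measure M (sym_diff A B) < e"
  shows "rigid A"
  unfolding rigid_def
proof (rule LIMSEQ_I)
  fix r :: real
  assume "r > 0"
  then obtain B where B: "B \<in> sets M" "rigid B" and AB: "measure M (sym_diff A B) < r / 4"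
    using approx[of "r / 4"] by auto
  obtain n0 where n0: "\<And>n. n \<ge> n0 \<Longrightarrow> norm (measure M (sym_diff (S n -` B) B \<inter> W n) - 0) < r / 2"
    using LIMSEQ_D[OF B(2)[unfolded rigid_def], of "r / 2"] \<open>r > 0\<close> by auto
  have "norm (measure M (sym_diff (S n -` A) A \<inter> W n) - 0) < r" if "n \<ge> n0" for n
    using rigidity_defect_le[OF A B(1), of n] n0[OF that] AB by simp
  then show "\<exists>n0. \<forall>n\<ge>n0. norm (measure M (sym_diff (S n -` A) A \<inter> W n) - 0) < r"
    by blast
qed

lemma rigid_UN:
  fixes A :: "nat \<Rightarrow> 'a set"
  assumes A: "\<And>i. A i \<in> sets M" and rigid_A: "\<And>i. rigid (A i)"
  shows "rigid (\<Union>i. A i)"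
proof (rule rigid_approx)
  show U: "(\<Union>i. A i) \<in> sets M"
    using A by (intro sets.countable_UN) auto
  have UK: "(\<Union>i<K. A i) \<in> sets M" for K
    using A by (intro sets.finite_UN) auto
  have "(\<lambda>K. measure M (\<Union>i<K. A i)) \<longlonglongrightarrow> measure M (\<Union>K. \<Union>i<K. A i)"
    using UK by (intro finite_Lim_measure_incseq) (auto simp: incseq_def dest: less_le_trans)
  also have "(\<Union>K. \<Union>i<K. A i) = (\<Union>i. A i)"
    by (auto intro: lessI)
  finally have "(\<lambda>K. measure M (\<Union>i. A i) - measure M (\<Union>i<K. A i))
      \<longlonglongrightarrow> measure M (\<Union>i. A i) - measure M (\<Union>i. A i)"
    by (intro tendsto_diff tendsto_const)
  moreover have "measure M (sym_diff (\<Union>i. A i) (\<Union>i<K. A i))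
      = measure M (\<Union>i. A i) - measure M (\<Union>i<K. A i)" for K
  proof -
    have "sym_diff (\<Union>i. A i) (\<Union>i<K. A i) = (\<Union>i. A i) - (\<Union>i<K. A i)"
      by blast
    then show ?thesis
      using finite_measure_Diff[OF U UK[of K]] by auto
  qed
  ultimately have lim: "(\<lambda>K. measure M (sym_diff (\<Union>i. A i) (\<Union>i<K. A i))) \<longlonglongrightarrow> 0"
    by simp
  fix e :: real
  assume "e > 0"
  then obtain K where "measure M (sym_diff (\<Union>i. A i) (\<Union>i<K. A i)) < e"
    using LIMSEQ_D[OF lim, of e] by auto
  then show "\<exists>B\<in>sets M. rigid B \<and> measure M (sym_diff (\<Union>i. A i) B) < e"
    using UK rigid_finite_UN[OF A rigid_A] by (intro bexI[of _ "\<Union>i<K. A i"]) auto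
qed

end

definition shell :: "'a::metric_space set \<Rightarrow> real \<Rightarrow> 'a set" where
  "shell F r = (\<Union>y\<in>F. ball y r) - F"

lemma shell_mono: "r \<le> s \<Longrightarrow> shell F r \<subseteq> shell F s"
  unfolding shell_def by auto

lemma Inter_shell_eq_empty:
  assumes "closed F"
  shows "(\<Inter>k. shell F (1 / Suc k)) = {}"
proof (rule equals0I)
  fix x
  assume x: "x \<in> (\<Inter>k. shell F (1 / Suc k))"
  have "x \<in> closure F"
    unfolding closure_approachable
  proof (intro allI impI)
    fix e :: real
    assume "e > 0"
    then obtain k where k: "1 / Suc k < e"
      using nat_approx_posE by blast
    from x obtain y where "y \<in> F" "dist y x < 1 / Suc k"
      unfolding shell_def by auto
    then show "\<exists>y\<in>F. dist y x < e"
      using k by (meson less_trans)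
  qed
  moreover have "x \<notin> F"
    using x unfolding shell_def by auto
  ultimately show False
    using closure_closed[OF assms] by simp
qed

lemma sym_diff_vimage_subset_shell:
  "sym_diff (S -` F) F \<inter> {x. dist (S x) x < r} \<subseteq> shell F r \<union> S -` shell F r"
  unfolding shell_def by (fastforce simp: dist_commute)

locale vanishing_displacement = rigidity_setting M S W for M :: "'a::metric_space measure" and S W +
  assumes sets_eq_borel: "sets M = sets borel"
    and displacement_tendsto_0: "(\<lambda>n. SUP x\<in>W n. ennreal (dist (S n x) x)) \<longlonglongrightarrow> 0"
begin

lemma eventually_displacement_less:
  assumes "d > 0"
  shows "\<forall>\<^sub>F n in sequentially. \<forall>x\<in>W n. dist (S n x) x < d"
proof -
  have "\<forall>\<^sub>F n in sequentially. (SUP x\<in>W n. ennreal (dist (S n x) x)) < ennreal d"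
    using order_tendstoD(2)[OF displacement_tendsto_0] assms by simp
  then show ?thesis
  proof (rule eventually_mono)
    fix n
    assume sup_less: "(SUP x\<in>W n. ennreal (dist (S n x) x)) < ennreal d"
    have "ennreal (dist (S n x) x) < ennreal d" if "x \<in> W n" for x
      by (rule le_less_trans[OF SUP_upper[OF that] sup_less])
    then show "\<forall>x\<in>W n. dist (S n x) x < d"
      by (simp add: ennreal_less_iff)
  qed
qed

lemma sets_shell:
  assumes "closed F"
  shows "shell F r \<in> sets M"
  unfolding shell_def sets_eq_borel using assms by (intro sets.Diff borel_open borel_closed) auto

lemma measure_shell_tendsto_0:
  assumes "closed F"
  shows "(\<lambda>k. measure M (shell F (1 / Suc k))) \<longlonglongrightarrow> 0"
proof -
  have "range (\<lambda>k. shell F (1 / Suc k)) \<subseteq> sets M"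
    using sets_shell[OF assms] by blast
  moreover have "decseq (\<lambda>k. shell F (1 / Suc k))"
    by (intro decseq_SucI shell_mono) (simp add: frac_le)
  ultimately have "(\<lambda>k. measure M (shell F (1 / Suc k))) \<longlonglongrightarrow> measure M (\<Inter>k. shell F (1 / Suc k))"
    by (rule finite_Lim_measure_decseq)
  then show ?thesis
    using Inter_shell_eq_empty[OF assms] by simp
qed

lemma rigid_closed:
  assumes "closed F"
  shows "rigid F"
  unfolding rigid_def
proof (rule LIMSEQ_I)
  fix r :: real
  assume "r > 0"
  then obtain k where small: "measure M (shell F (1 / Suc k)) < r / 2"
    using LIMSEQ_D[OF measure_shell_tendsto_0[OF assms], of "r / 2"] by auto
  let ?N = "shell F (1 / Suc k)"
  have N: "?N \<in> sets M" "S n -` ?N \<in> sets M" for n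
    using sets_shell[OF assms] sets_vimage_S by auto
  obtain n0 where n0: "\<And>n. n \<ge> n0 \<Longrightarrow> \<forall>x\<in>W n. dist (S n x) x < 1 / Suc k"
    using eventually_displacement_less[of "1 / Suc k"] unfolding eventually_sequentially by auto
  have "norm (measure M (sym_diff (S n -` F) F \<inter> W n) - 0) < r" if "n \<ge> n0" for n
  proof -
    have "W n \<subseteq> {x. dist (S n x) x < 1 / Suc k}"
      using n0[OF that] by auto
    then have "sym_diff (S n -` F) F \<inter> W n \<subseteq> ?N \<union> S n -` ?N"
      by (rule order_trans[OF Int_mono[OF order_refl] sym_diff_vimage_subset_shell])
    then have "measure M (sym_diff (S n -` F) F \<inter> W n) \<le> measure M (?N \<union> S n -` ?N)"
      using N by (intro finite_measure_mono sets.Un)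
    also have "\<dots> \<le> measure M ?N + measure M (S n -` ?N)"
      using N by (rule measure_Un_le)
    also have "\<dots> = 2 * measure M ?N"
      using measure_vimage_S[OF N(1)] by simp
    finally show ?thesis
      using small by simp
  qed
  then show "\<exists>n0. \<forall>n\<ge>n0. norm (measure M (sym_diff (S n -` F) F \<inter> W n) - 0) < r"
    by blast
qed

lemma rigid_sets:
  assumes "A \<in> sets M"
  shows "rigid A"
proof -
  have "A \<in> sigma_sets UNIV {S. open S}"
    using assms by (metis sets_eq_borel sets_borel)
  then show ?thesis
  proof (induction rule: sigma_sets.induct)
    case (Basic U)
    then have "rigid (- (- U))"
      by (intro rigid_Compl rigid_closed) (auto simp: closed_def)
    then show ?case
      by simp
  next
    case Empty
    then show ?case
      by (rule rigid_empty)
  next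
    case (Compl U)
    then show ?case
      using rigid_Compl by (simp add: Compl_eq_Diff_UNIV[symmetric])
  next
    case (Union U)
    then show ?case
      using rigid_UN[of U] sets_eq_borel sets_borel by auto
  qed
qed

end

theorem lemma3p3:
  fixes M :: "'a::metric_space measure" and T :: "'a \<Rightarrow> 'a"
    and f :: "'a \<Rightarrow> 'b::polish_space"
    and W :: "nat \<Rightarrow> 'a set" and q :: "nat \<Rightarrow> nat"
  assumes "prob_space M"
    and "space M = UNIV" and "sets M = sets borel"
    and "standard_borel_via M f"
    and "mp_automorphism M T"
    and "\<And>n. W n \<in> sets M"
    and "strict_mono q"
    and "(\<lambda>n. SUP x\<in>W n. ennreal (dist ((T ^^ q n) x) x)) \<longlonglongrightarrow> 0"
  shows "rigidity_seq_along M T q W"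
proof -
  interpret prob_space M
    by (fact assms(1))
  have T: "measure_preserving M T"
    using assms(5) by (simp add: mp_automorphism_def)
  interpret vanishing_displacement M "\<lambda>n. T ^^ q n" W
  proof unfold_locales
    show "measure_preserving M (T ^^ q n)" for n
      using T by (rule measure_preserving_funpow)
  qed (fact assms)+
  show ?thesis
    unfolding rigidity_seq_along_def
    using rigid_sets by (simp add: rigid_def assms(2))
qed

end
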